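(* There exists a fragile triangle-free graph (i.e., of girth at least $4$) with chromatic number $4$.
   Context: All graphs are finite and simple. A graph is $k$-connected if it has at least $k+1$ vertices and no vertex cutset with at most $k-1$ vertices. A graph is fragile if it has no $3$-connected subgraph. *)

theory Defs
  imports Main
begin

definition simple_graph :: "'a set \<Rightarrow> ('a \<Rightarrow> 'a \<Rightarrow> bool) \<Rightarrow> bool" where
  "simple_graph V E \<longleftrightarrow> finite V \<and> (\<forall>x y. E x y \<longrightarrow> x \<in> V \<and> y \<in> V)
     \<and> (\<forall>x y. E x y \<longrightarrow> E y x) \<and> (\<forall>x. \<not> E x x)"

definition subgraph :: "'a set \<Rightarrow> ('a \<Rightarrow> 'a \<Rightarrow> bool) \<Rightarrow> 'a set \<Rightarrow> ('a \<Rightarrow> 'a \<Rightarrow> bool) \<Rightarrow> bool" where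
  "subgraph W F V E \<longleftrightarrow> simple_graph W F \<and> W \<subseteq> V \<and> (\<forall>x y. F x y \<longrightarrow> E x y)"

definition connected_graph :: "'a set \<Rightarrow> ('a \<Rightarrow> 'a \<Rightarrow> bool) \<Rightarrow> bool" where
  "connected_graph V E \<longleftrightarrow>
     (\<forall>x\<in>V. \<forall>y\<in>V. (\<lambda>u v. u \<in> V \<and> v \<in> V \<and> E u v)\<^sup>*\<^sup>* x y)"

definition k_connected :: "nat \<Rightarrow> 'a set \<Rightarrow> ('a \<Rightarrow> 'a \<Rightarrow> bool) \<Rightarrow> bool" where
  "k_connected k V E \<longleftrightarrow> card V \<ge> k + 1 \<and>
     (\<forall>S. S \<subseteq> V \<and> card S \<le> k - 1 \<longrightarrow> connected_graph (V - S) E)"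

definition fragile :: "'a set \<Rightarrow> ('a \<Rightarrow> 'a \<Rightarrow> bool) \<Rightarrow> bool" where
  "fragile V E \<longleftrightarrow> \<not> (\<exists>W F. subgraph W F V E \<and> k_connected 3 W F)"

definition triangle_free :: "'a set \<Rightarrow> ('a \<Rightarrow> 'a \<Rightarrow> bool) \<Rightarrow> bool" where
  "triangle_free V E \<longleftrightarrow> \<not> (\<exists>x\<in>V. \<exists>y\<in>V. \<exists>z\<in>V. E x y \<and> E y z \<and> E x z)"

definition colorable :: "'a set \<Rightarrow> ('a \<Rightarrow> 'a \<Rightarrow> bool) \<Rightarrow> nat \<Rightarrow> bool" where
  "colorable V E k \<longleftrightarrow> (\<exists>c :: 'a \<Rightarrow> nat. (\<forall>x\<in>V. c x < k) \<and>
     (\<forall>x\<in>V. \<forall>y\<in>V. E x y \<longrightarrow> c x \<noteq> c y))"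

definition chromatic_number :: "'a set \<Rightarrow> ('a \<Rightarrow> 'a \<Rightarrow> bool) \<Rightarrow> nat" where
  "chromatic_number V E = (LEAST k. colorable V E k)"

end

theory Submission
  imports Defs
begin

text \<open>The graph is made of two copies of a half graph on the vertices 0..16 (the second
 copy shifted by 17), whose "apexes" 8 and 16 are joined to the apexes 25 and 33 of the other
 copy by a complete bipartite graph. In every 3-colouring of a half, vertex 8 repeats the
 colour of 7 or of 14 while 16 is adjacent to both, so 8 and 16 get different colours; with
 the cross edges the four apexes would then need four colours. The first half, and the second
 half together with 8 and 16, are 2-degenerate, so neither contains a 3-connected subgraph
 (which has minimum degree 3); and they meet only in the 2-separator {8, 16}, which a
 3-connected subgraph cannot straddle.\<close>

lemma k_connected_3_degree_ge_3:
  assumes kc: "k_connected 3 W F" and sg: "simple_graph W F" and x: "x \<in> W"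
  shows "3 \<le> card {y \<in> W. F x y}"
proof (rule ccontr)
  define S where "S = {y \<in> W. F x y}"
  assume "\<not> 3 \<le> card {y \<in> W. F x y}"
  then have card_S: "card S \<le> 2" unfolding S_def by simp
  have fin: "finite W" and loopless: "\<And>u. \<not> F u u"
    using sg unfolding simple_graph_def by auto
  have SW: "S \<subseteq> W" unfolding S_def by auto
  have conn: "connected_graph (W - S) F"
    using kc SW card_S unfolding k_connected_def by auto
  have x_rest: "x \<in> W - S" using x loopless unfolding S_def by auto
  have "card (W - S) \<ge> 2"
    using kc card_S card_Diff_subset[OF finite_subset[OF SW fin] SW]
    unfolding k_connected_def by linarith
  then have "W - S \<noteq> {x}" by auto
  then obtain y where y: "y \<in> W - S" "y \<noteq> x" using x_rest by blast
  have "(\<lambda>u v. u \<in> W - S \<and> v \<in> W - S \<and> F u v)\<^sup>*\<^sup>* x y"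
    using conn x_rest y unfolding connected_graph_def by blast
  then show False
  proof (cases rule: converse_rtranclpE)
    case base
    then show False using y by blast
  next
    case (step z)
    then show False unfolding S_def by blast
  qed
qed

lemma fragile_empty: "fragile {} E"
  unfolding fragile_def subgraph_def k_connected_def by simp

lemma fragile_insert_low_degree:
  assumes fr: "fragile V E" and fin: "finite V" and low: "card {y \<in> V. E x y} \<le> 2"
  shows "fragile (insert x V) E"
  unfolding fragile_def
proof
  assume "\<exists>W F. subgraph W F (insert x V) E \<and> k_connected 3 W F"
  then obtain W F where sg: "subgraph W F (insert x V) E" and kc: "k_connected 3 W F"
    by blast
  have sgW: "simple_graph W F" and WV: "W \<subseteq> insert x V" and FE: "\<And>u v. F u v \<Longrightarrow> E u v"
    using sg unfolding subgraph_def by auto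
  show False
  proof (cases "x \<in> W")
    case False
    then have "subgraph W F V E" using sg unfolding subgraph_def by auto
    with kc fr show False unfolding fragile_def by blast
  next
    case True
    have loopless: "\<not> F x x" using sgW unfolding simple_graph_def by blast
    have "{y \<in> W. F x y} \<subseteq> {y \<in> V. E x y}"
      using WV FE loopless by blast
    then have "card {y \<in> W. F x y} \<le> card {y \<in> V. E x y}"
      using fin by (simp add: card_mono)
    with k_connected_3_degree_ge_3[OF kc sgW True] low show False by linarith
  qed
qed

fun peeling_order :: "('a \<Rightarrow> 'a \<Rightarrow> bool) \<Rightarrow> 'a list \<Rightarrow> bool" where
  "peeling_order E [] = True"
| "peeling_order E (x # xs) \<longleftrightarrow> card (set (filter (E x) xs)) \<le> 2 \<and> peeling_order E xs"

lemma peeling_order_fragile: "peeling_order E xs \<Longrightarrow> fragile (set xs) E"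
proof (induction xs)
  case Nil
  then show ?case using fragile_empty by simp
next
  case (Cons x xs)
  then show ?case
    using fragile_insert_low_degree[of "set xs" E x] by (simp add: set_filter)
qed

lemma fragile_Un:
  assumes fA: "fragile A E" and fB: "fragile B E"
    and fin: "finite (A \<inter> B)" and sep: "card (A \<inter> B) \<le> 2"
    and no_cross: "\<And>x y. x \<in> A - B \<Longrightarrow> y \<in> B - A \<Longrightarrow> \<not> E x y"
  shows "fragile (A \<union> B) E"
  unfolding fragile_def
proof
  assume "\<exists>W F. subgraph W F (A \<union> B) E \<and> k_connected 3 W F"
  then obtain W F where sg: "subgraph W F (A \<union> B) E" and kc: "k_connected 3 W F" by blast
  have FE: "\<And>u v. F u v \<Longrightarrow> E u v" and WV: "W \<subseteq> A \<union> B"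
    using sg unfolding subgraph_def by auto
  have "\<not> W \<subseteq> A" "\<not> W \<subseteq> B"
    using sg kc fA fB unfolding fragile_def subgraph_def by blast+
  then obtain u v where u: "u \<in> W" "u \<notin> A" and v: "v \<in> W" "v \<notin> B" by blast
  define T where "T = W \<inter> (A \<inter> B)"
  have "card T \<le> 2" using card_mono[OF fin, of T] sep unfolding T_def by fastforce
  then have "connected_graph (W - T) F" using kc unfolding k_connected_def T_def by auto
  then have path: "(\<lambda>p q. p \<in> W - T \<and> q \<in> W - T \<and> F p q)\<^sup>*\<^sup>* v u"
    using u v unfolding connected_graph_def T_def by blast
  have "z \<in> A - B" if "(\<lambda>p q. p \<in> W - T \<and> q \<in> W - T \<and> F p q)\<^sup>*\<^sup>* v z" for z
    using that
  proof (induction rule: rtranclp_induct)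
    case base
    then show ?case using v WV by blast
  next
    case (step y z)
    then show ?case using no_cross[of y z] FE WV unfolding T_def by blast
  qed
  from this[OF path] u show False by blast
qed

definition adj_of :: "('a \<times> 'a) list \<Rightarrow> 'a \<Rightarrow> 'a \<Rightarrow> bool" where
  "adj_of es x y \<longleftrightarrow> (x, y) \<in> set es \<or> (y, x) \<in> set es"

lemma simple_graph_adj_of:
  assumes "finite V" "\<forall>(a, b) \<in> set es. a \<in> V \<and> b \<in> V" "\<forall>(a, b) \<in> set es. a \<noteq> b"
  shows "simple_graph V (adj_of es)"
  using assms unfolding simple_graph_def adj_of_def by auto

fun neighbours :: "('a \<times> 'a) list \<Rightarrow> 'a \<Rightarrow> 'a list" where
  "neighbours [] x = []"
| "neighbours ((a, b) # es) x =
     (if a = x then [b] else []) @ (if b = x then [a] else []) @ neighbours es x"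

lemma adj_of_iff_neighbours: "adj_of es x y \<longleftrightarrow> y \<in> set (neighbours es x)"
  by (induction es x rule: neighbours.induct) (auto simp: adj_of_def)

lemma triangle_free_adj_of:
  assumes "\<forall>(a, b) \<in> set es. \<forall>z \<in> set (neighbours es a). z \<notin> set (neighbours es b)"
  shows "triangle_free V (adj_of es)"
  unfolding triangle_free_def
proof (intro notI, elim bexE conjE)
  fix x y z assume xy: "adj_of es x y" and "adj_of es y z" "adj_of es x z"
  then have "z \<in> set (neighbours es x)" "z \<in> set (neighbours es y)"
    by (simp_all add: adj_of_iff_neighbours adj_of_def)
  moreover have "(x, y) \<in> set es \<or> (y, x) \<in> set es" using xy unfolding adj_of_def .
  ultimately show False using assms by blast
qed

lemma colorable_adj_of:
  assumes "\<forall>x \<in> V. c x < k" "\<forall>(a, b) \<in> set es. c a \<noteq> c b"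
  shows "colorable V (adj_of es) k"
  unfolding colorable_def
proof (intro exI[of _ c] conjI)
  show "\<forall>x\<in>V. \<forall>y\<in>V. adj_of es x y \<longrightarrow> c x \<noteq> c y"
    using assms(2) unfolding adj_of_def by fastforce
qed (fact assms(1))

lemma colorable_adj_ofD:
  assumes "colorable V (adj_of es) k" "\<forall>(a, b) \<in> set es. a \<in> V \<and> b \<in> V"
  obtains c where "\<forall>x \<in> V. c x < k" "\<forall>(a, b) \<in> set es. c a \<noteq> c b"
proof -
  obtain c where col: "\<forall>x \<in> V. c x < k" and proper: "\<forall>x\<in>V. \<forall>y\<in>V. adj_of es x y \<longrightarrow> c x \<noteq> c y"
    using assms(1) unfolding colorable_def by blast
  have "\<forall>(a, b) \<in> set es. c a \<noteq> c b"
    using proper assms(2) unfolding adj_of_def by fastforce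
  with col that show thesis by blast
qed

lemma chromatic_number_eqI:
  assumes "colorable V E (Suc k)" "\<not> colorable V E k"
  shows "chromatic_number V E = Suc k"
  unfolding chromatic_number_def
proof (rule Least_equality)
  show "colorable V E (Suc k)" by fact
  fix j assume "colorable V E j"
  then have "colorable V E k" if "j \<le> k"
    using that unfolding colorable_def by (meson order_less_le_trans)
  with assms(2) show "Suc k \<le> j" by linarith
qed

lemma third_colour_unique:
  fixes a b x y :: nat
  assumes "a < 3" "b < 3" "x < 3" "y < 3" "a \<noteq> b"
    "x \<noteq> a" "x \<noteq> b" "y \<noteq> a" "y \<noteq> b"
  shows "x = y"
  using assms by linarith

text \<open>A path x0 x1 x2 x3 avoiding colour a is 2-coloured by the other two colours, so
 its ends differ.\<close>
lemma path_forces_colour: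
  fixes a x0 x1 x2 x3 q :: nat
  assumes "a < 3" "x0 < 3" "x1 < 3" "x2 < 3" "x3 < 3" "q < 3"
    "x0 \<noteq> a" "x1 \<noteq> a" "x2 \<noteq> a" "x3 \<noteq> a"
    "x0 \<noteq> x1" "x1 \<noteq> x2" "x2 \<noteq> x3" "q \<noteq> x0" "q \<noteq> x3"
  shows "q = a"
proof -
  have "x2 = x0" using third_colour_unique[of a x1 x2 x0] assms by simp
  then have "x3 = x1" using third_colour_unique[of a x0 x3 x1] assms by simp
  with \<open>x2 = x0\<close> show "q = a" using third_colour_unique[of x0 x1 q a] assms by simp
qed

definition gadget_edges :: "(nat \<times> nat) list" where
  "gadget_edges = [(0,1), (0,2), (0,4), (1,3), (1,6), (2,3), (2,7), (2,8), (3,5), (4,5),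
    (4,6), (5,11), (5,15), (6,7), (6,8), (7,11), (7,15), (9,10), (9,11), (9,13), (10,12),
    (10,15), (11,12), (12,14), (13,14), (13,15)]"

lemma gadget_colouring_repeats:
  fixes d :: "nat \<Rightarrow> nat"
  assumes col: "\<forall>i \<le> 15. d i < 3" and proper: "\<forall>(i, j) \<in> set gadget_edges. d i \<noteq> d j"
  shows "d 8 = d 7 \<or> d 8 = d 14"
proof (cases "d 8 = d 7")
  case False
  then have d87: "d 8 \<noteq> d 7" .
  have c: "d 0 < 3" "d 1 < 3" "d 2 < 3" "d 3 < 3" "d 4 < 3" "d 5 < 3" "d 6 < 3" "d 7 < 3"
    "d 8 < 3" "d 9 < 3" "d 10 < 3" "d 11 < 3" "d 12 < 3" "d 13 < 3" "d 14 < 3" "d 15 < 3"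
    using col by simp_all
  have e: "d 0 \<noteq> d 1" "d 0 \<noteq> d 2" "d 0 \<noteq> d 4" "d 1 \<noteq> d 3" "d 1 \<noteq> d 6"
    "d 2 \<noteq> d 3" "d 2 \<noteq> d 7" "d 2 \<noteq> d 8" "d 3 \<noteq> d 5" "d 4 \<noteq> d 5" "d 4 \<noteq> d 6"
    "d 5 \<noteq> d 11" "d 5 \<noteq> d 15" "d 6 \<noteq> d 7" "d 6 \<noteq> d 8" "d 7 \<noteq> d 11" "d 7 \<noteq> d 15"
    "d 9 \<noteq> d 10" "d 9 \<noteq> d 11" "d 9 \<noteq> d 13" "d 10 \<noteq> d 12" "d 10 \<noteq> d 15"
    "d 11 \<noteq> d 12" "d 12 \<noteq> d 14" "d 13 \<noteq> d 14" "d 13 \<noteq> d 15"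
    using proper by (simp_all add: gadget_edges_def)
  have d26: "d 2 = d 6"
    using third_colour_unique[of "d 7" "d 8" "d 2" "d 6"] c e d87 by metis
  have d52: "d 5 = d 2"
    using path_forces_colour[of "d 2" "d 4" "d 0" "d 1" "d 3" "d 5"] c e d26 by metis
  have d11_15: "d 11 = d 15"
    using third_colour_unique[of "d 5" "d 7" "d 11" "d 15"] c e d52 by metis
  have d14: "d 14 = d 11"
    using path_forces_colour[of "d 11" "d 13" "d 9" "d 10" "d 12" "d 14"] c e d11_15 by metis
  have "d 8 = d 11"
    using third_colour_unique[of "d 5" "d 7" "d 8" "d 11"] c e d52 d87 by metis
  with d14 show ?thesis by simp
qed simp

definition half_edges :: "(nat \<times> nat) list" where
  "half_edges = (7, 16) # (14, 16) # gadget_edges"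

lemma half_colouring_separates_apexes:
  fixes d :: "nat \<Rightarrow> nat"
  assumes col: "\<forall>i \<le> 16. d i < 3" and proper: "\<forall>(i, j) \<in> set half_edges. d i \<noteq> d j"
  shows "d 8 \<noteq> d 16"
  using gadget_colouring_repeats[of d] col proper by (auto simp: half_edges_def)

definition graph_edges :: "(nat \<times> nat) list" where
  "graph_edges = half_edges @ map (\<lambda>(a, b). (a + 17, b + 17)) half_edges
     @ [(8, 25), (8, 33), (16, 25), (16, 33)]"

abbreviation G :: "nat \<Rightarrow> nat \<Rightarrow> bool" where
  "G \<equiv> adj_of graph_edges"

lemma graph_edges_in_range: "\<forall>(a, b) \<in> set graph_edges. a \<in> {..<34} \<and> b \<in> {..<34}"
  unfolding atLeast_upt by code_simp

lemma simple_graph_G: "simple_graph {..<34} G"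
  by (rule simple_graph_adj_of[OF _ graph_edges_in_range]) (simp, code_simp)

lemma triangle_free_G: "triangle_free {..<34} G"
  by (rule triangle_free_adj_of) code_simp

lemma fragile_G: "fragile {..<34} G"
proof -
  define A where "A = [8, 16, 14, 12, 10, 9, 11, 13, 15, 5, 3, 1, 0, 2, 4, 6, 7 :: nat]"
  define B where "B = [8, 16, 25, 33, 31, 29, 27, 26, 28, 30, 32, 22, 20, 18, 17, 19, 21, 23, 24 :: nat]"
  have "peeling_order G A" "peeling_order G B"
    unfolding A_def B_def by code_simp+
  then have "fragile (set A) G" "fragile (set B) G"
    by (simp_all add: peeling_order_fragile)
  moreover have "set A \<inter> set B = {8, 16}" by (simp add: A_def B_def)
  moreover have "\<forall>(u, w) \<in> set graph_edges.
      \<not> (u \<in> set A - set B \<and> w \<in> set B - set A) \<and> \<not> (w \<in> set A - set B \<and> u \<in> set B - set A)"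
    unfolding A_def B_def by code_simp
  then have "\<not> G x y" if "x \<in> set A - set B" "y \<in> set B - set A" for x y
    using that unfolding adj_of_def by fast
  ultimately have "fragile (set A \<union> set B) G" using fragile_Un[of "set A" G "set B"] by simp
  moreover have "set A \<union> set B = {..<34}" unfolding A_def B_def atLeast_upt by code_simp
  ultimately show ?thesis by simp
qed

definition colouring :: "nat list" where
  "colouring = [0,1,1,0,1,2,0,2,2,0,1,1,0,1,2,0,0,0,1,1,0,1,2,0,2,3,0,1,1,0,1,2,0,1]"

lemma colorable_G_4: "colorable {..<34} G 4"
proof (rule colorable_adj_of)
  show "\<forall>x \<in> {..<34}. colouring ! x < 4" unfolding atLeast_upt by code_simp
  show "\<forall>(a, b) \<in> set graph_edges. colouring ! a \<noteq> colouring ! b" by code_simp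
qed

lemma not_colorable_G_3: "\<not> colorable {..<34} G 3"
proof
  assume "colorable {..<34} G 3"
  then obtain c :: "nat \<Rightarrow> nat" where col: "\<forall>x \<in> {..<34}. c x < 3"
    and proper: "\<forall>(a, b) \<in> set graph_edges. c a \<noteq> c b"
    using colorable_adj_ofD[OF _ graph_edges_in_range] by blast
  have "c 8 \<noteq> c 16"
  proof (rule half_colouring_separates_apexes)
    show "\<forall>i \<le> 16. c i < 3" using col by simp
    show "\<forall>(i, j) \<in> set half_edges. c i \<noteq> c j" using proper by (simp add: graph_edges_def)
  qed
  moreover have "c (8 + 17) \<noteq> c (16 + 17)"
  proof (rule half_colouring_separates_apexes[of "\<lambda>i. c (i + 17)"])
    show "\<forall>i \<le> 16. c (i + 17) < 3" using col by simp
    show "\<forall>(i, j) \<in> set half_edges. c (i + 17) \<noteq> c (j + 17)"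
      using proper by (auto simp: graph_edges_def)
  qed
  moreover have "c 8 \<noteq> c 25" "c 8 \<noteq> c 33" "c 16 \<noteq> c 25" "c 16 \<noteq> c 33"
    using proper by (simp_all add: graph_edges_def)
  moreover have "c 8 < 3" "c 16 < 3" "c 25 < 3" "c 33 < 3" using col by simp_all
  ultimately show False by simp
qed

theorem mainTheorem6:
  shows "\<exists>(V :: nat set) E. simple_graph V E \<and> fragile V E \<and> triangle_free V E
           \<and> chromatic_number V E = 4"
proof (intro exI conjI)
  show "simple_graph {..<34} G" by (rule simple_graph_G)
  show "fragile {..<34} G" by (rule fragile_G)
  show "triangle_free {..<34} G" by (rule triangle_free_G)
  show "chromatic_number {..<34} G = 4"
    using chromatic_number_eqI[of "{..<34}" G 3] colorable_G_4 not_colorable_G_3 by simp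
qed

end
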